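(* Let $n\ge2$ and let $T$ be a symmetric linear isomorphism of $\mathbb R^n$ which is not positive-definite. Then the equation $X^\circ=T(X)$ has infinitely many solutions $X\in\mathcal K_{(0),b}^n$. In particular $X^\circ=-X$ has infinitely many solutions in $\mathcal K_{(0),b}^n$.
   Context: $\mathcal K_{(0),b}^n$: compact convex subsets of $\mathbb R^n$ containing $0$ in their interior. Polar: $X^\circ=\{x:\sup_{a\in X}\langle a,x\rangle\le1\}$. *)

theory Defs
  imports "HOL-Analysis.Analysis"
begin

definition polar :: "('a::real_inner) set \<Rightarrow> 'a set" where
  "polar X = {x. \<forall>a\<in>X. a \<bullet> x \<le> 1}"

definition K0b :: "('a::euclidean_space) set set" where
  "K0b = {X. compact X \<and> convex X \<and> 0 \<in> interior X}"

definition symmetric_map :: "('a::real_inner \<Rightarrow> 'a) \<Rightarrow> bool" where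
  "symmetric_map T \<longleftrightarrow> linear T \<and> (\<forall>x y. T x \<bullet> y = x \<bullet> T y)"

definition positive_definite :: "('a::real_inner \<Rightarrow> 'a) \<Rightarrow> bool" where
  "positive_definite T \<longleftrightarrow> (\<forall>x. x \<noteq> 0 \<longrightarrow> x \<bullet> T x > 0)"

end

theory Submission
  imports Defs
begin

text \<open>Diagonalise \<open>T\<close> in an orthonormal eigenbasis \<open>e\<^sub>i\<close> with eigenvalues \<open>\<lambda>\<^sub>i \<noteq> 0\<close>. For positive
  weights \<open>p\<^sub>i, q\<^sub>i\<close> the body \<open>{x. \<Sum>\<^sub>i p\<^sub>i (x \<bullet> e\<^sub>i)\<^sub>+\<^sup>2 + q\<^sub>i (x \<bullet> e\<^sub>i)\<^sub>-\<^sup>2 \<le> 1}\<close> has as polar the body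
  with weights \<open>1/p\<^sub>i, 1/q\<^sub>i\<close>, by Young's inequality in each coordinate. Since \<open>T\<close> multiplies the
  \<open>i\<close>-th coordinate by \<open>\<lambda>\<^sub>i\<close>, the image of such a body is again one of them. Taking \<open>p\<^sub>i = q\<^sub>i = \<lambda>\<^sub>i\<close>
  when \<open>\<lambda>\<^sub>i > 0\<close>, and \<open>p\<^sub>i = -\<lambda>\<^sub>i c\<^sup>2\<close>, \<open>q\<^sub>i = -\<lambda>\<^sub>i / c\<^sup>2\<close> when \<open>\<lambda>\<^sub>i < 0\<close> (there \<open>T\<close> swaps the two
  half-axes), gives \<open>X\<degree> = T X\<close> for every \<open>c > 0\<close>; as \<open>T\<close> is not positive definite some \<open>\<lambda>\<^sub>i\<close> is
  negative, and then distinct \<open>c\<close> give distinct bodies.\<close>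

section \<open>Spectral theorem for symmetric maps\<close>

lemma linear_coeff_zero_if_quadratic_nonneg:
  fixes A B :: real
  assumes "\<forall>t. A * t + B * t^2 \<ge> 0"
  shows "A = 0"
proof (rule ccontr)
  assume "A \<noteq> 0"
  define D where "D = \<bar>B\<bar> + 1"
  have D: "D > 0" "B < D" unfolding D_def by auto
  define t where "t = - A / (2 * D)"
  have "A * t + B * t^2 = (A^2 / D) * (B / (4 * D) - 1 / 2)"
    unfolding t_def using D by (simp add: field_simps power2_eq_square)
  also have "\<dots> < 0"
    using \<open>A \<noteq> 0\<close> D by (intro mult_pos_neg) (simp_all add: field_simps)
  finally show False using assms by (metis not_less)
qed

lemma symmetric_map_linear: "symmetric_map T \<Longrightarrow> linear T"
  and symmetric_map_inner: "symmetric_map T \<Longrightarrow> T x \<bullet> y = x \<bullet> T y"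
  unfolding symmetric_map_def by blast+

lemma quadratic_form_min_on_unit_sphere:
  fixes T :: "'a::euclidean_space \<Rightarrow> 'a"
  assumes "linear T" "subspace V" "V \<noteq> {0}"
  obtains e where "e \<in> V" "norm e = 1" "\<And>z. z \<in> V \<Longrightarrow> (e \<bullet> T e) * (z \<bullet> z) \<le> z \<bullet> T z"
proof -
  have normalize: "z /\<^sub>R norm z \<in> V \<inter> sphere 0 1" if "z \<in> V" "z \<noteq> 0" for z
    using that assms(2) by (auto simp: subspace_scale)
  have "V \<inter> sphere 0 1 \<noteq> {}"
    using assms(2,3) normalize subspace_0 by blast
  moreover have "compact (V \<inter> sphere 0 1)"
    using closed_subspace[OF assms(2)] by (simp add: closed_Int_compact)
  moreover have "continuous_on (V \<inter> sphere 0 1) (\<lambda>x. x \<bullet> T x)"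
    using assms(1) by (intro continuous_intros linear_continuous_on linear_conv_bounded_linear[THEN iffD1])
  ultimately obtain e where e: "e \<in> V \<inter> sphere 0 1" and emin: "\<And>y. y \<in> V \<inter> sphere 0 1 \<Longrightarrow> e \<bullet> T e \<le> y \<bullet> T y"
    using continuous_attains_inf by metis
  have "(e \<bullet> T e) * (z \<bullet> z) \<le> z \<bullet> T z" if "z \<in> V" for z
  proof (cases "z = 0")
    case True
    then show ?thesis using linear_0[OF assms(1)] by simp
  next
    case False
    have "e \<bullet> T e \<le> (z /\<^sub>R norm z) \<bullet> T (z /\<^sub>R norm z)"
      using emin normalize that False by blast
    also have "\<dots> = (z \<bullet> T z) / (z \<bullet> z)"
      by (simp add: linear_scale[OF assms(1)] power2_norm_eq_inner[symmetric] power2_eq_square divide_inverse)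
    finally show ?thesis using False by (simp add: field_simps)
  qed
  moreover have "e \<in> V" "norm e = 1" using e by auto
  ultimately show thesis using that by blast
qed

text \<open>A minimiser of the Rayleigh quotient is a critical point: the first-order term of
  \<open>(e + t y) \<bullet> T (e + t y) - m |e + t y|\<^sup>2 \<ge> 0\<close> in \<open>t\<close> must vanish.\<close>

lemma rayleigh_minimizer_eigenvector:
  fixes T :: "'a::euclidean_space \<Rightarrow> 'a"
  assumes T: "symmetric_map T" and V: "subspace V" "T ` V \<subseteq> V"
    and e: "e \<in> V" "norm e = 1"
    and min: "\<And>z. z \<in> V \<Longrightarrow> (e \<bullet> T e) * (z \<bullet> z) \<le> z \<bullet> T z"
  shows "T e = (e \<bullet> T e) *\<^sub>R e"
proof -
  define m where "m = e \<bullet> T e"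
  have lin: "linear T" using T by (rule symmetric_map_linear)
  have ee: "e \<bullet> e = 1" using e(2) by (simp add: dot_square_norm)
  have quadratic_nonneg:
    "2 * (y \<bullet> (T e - m *\<^sub>R e)) * t + (y \<bullet> T y - m * (y \<bullet> y)) * t^2 \<ge> 0"
    if "y \<in> V" for y t
  proof -
    have "e + t *\<^sub>R y \<in> V" using e(1) that V(1) by (simp add: subspace_add subspace_scale)
    from min[OF this] have nonneg: "m * ((e + t *\<^sub>R y) \<bullet> (e + t *\<^sub>R y)) \<le> (e + t *\<^sub>R y) \<bullet> T (e + t *\<^sub>R y)"
      unfolding m_def .
    have form: "(e + t *\<^sub>R y) \<bullet> T (e + t *\<^sub>R y) = m + 2 * t * (y \<bullet> T e) + t^2 * (y \<bullet> T y)"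
      using symmetric_map_inner[OF T, of e y] unfolding m_def
      by (simp add: linear_add[OF lin] linear_scale[OF lin] inner_add_left inner_add_right
          inner_commute power2_eq_square algebra_simps)
    have norm: "(e + t *\<^sub>R y) \<bullet> (e + t *\<^sub>R y) = 1 + 2 * t * (y \<bullet> e) + t^2 * (y \<bullet> y)"
      using ee by (simp add: inner_add_left inner_add_right inner_commute power2_eq_square algebra_simps)
    have "2 * (y \<bullet> (T e - m *\<^sub>R e)) * t + (y \<bullet> T y - m * (y \<bullet> y)) * t^2
        = (m + 2 * t * (y \<bullet> T e) + t^2 * (y \<bullet> T y)) - m * (1 + 2 * t * (y \<bullet> e) + t^2 * (y \<bullet> y))"
      by (simp add: inner_diff_right algebra_simps)
    then show ?thesis using nonneg unfolding form norm by linarith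
  qed
  have "T e - m *\<^sub>R e \<in> V" using e(1) V by (auto simp: subspace_diff subspace_scale)
  from linear_coeff_zero_if_quadratic_nonneg[OF allI, OF quadratic_nonneg[OF this]]
  show ?thesis unfolding m_def by simp
qed

lemma symmetric_map_invariant_orthogonal:
  assumes "symmetric_map T" "T e = c *\<^sub>R e" "T ` V \<subseteq> V"
  shows "T ` (V \<inter> {x. e \<bullet> x = 0}) \<subseteq> V \<inter> {x. e \<bullet> x = 0}"
proof safe
  fix x assume "x \<in> V" "e \<bullet> x = 0"
  moreover have "e \<bullet> T x = c * (e \<bullet> x)"
    using symmetric_map_inner[OF assms(1), of e x] assms(2) by simp
  ultimately show "T x \<in> V" "e \<bullet> T x = 0" using assms(3) by auto
qed

lemma symmetric_map_invariant_subspace_eigenbasis: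
  fixes T :: "'a::euclidean_space \<Rightarrow> 'a"
  assumes T: "symmetric_map T"
  shows "subspace V \<Longrightarrow> T ` V \<subseteq> V \<Longrightarrow> \<exists>B. B \<subseteq> V \<and> finite B \<and> pairwise orthogonal B \<and>
    (\<forall>e\<in>B. norm e = 1) \<and> span B = V \<and> (\<forall>e\<in>B. T e = (e \<bullet> T e) *\<^sub>R e)"
proof (induction "dim V" arbitrary: V rule: less_induct)
  case (less V)
  show ?case
  proof (cases "V = {0}")
    case True
    then show ?thesis by (intro exI[of _ "{}"]) auto
  next
    case False
    obtain e where e: "e \<in> V" "norm e = 1" and min: "\<And>z. z \<in> V \<Longrightarrow> (e \<bullet> T e) * (z \<bullet> z) \<le> z \<bullet> T z"
      using quadratic_form_min_on_unit_sphere[OF symmetric_map_linear[OF T] less.prems(1) False] by blast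
    have Te: "T e = (e \<bullet> T e) *\<^sub>R e"
      using rayleigh_minimizer_eigenvector[OF T less.prems e min] .
    define W where "W = V \<inter> {x. e \<bullet> x = 0}"
    have W: "subspace W" "T ` W \<subseteq> W"
      unfolding W_def using less.prems subspace_hyperplane subspace_inter
        symmetric_map_invariant_orthogonal[OF T Te less.prems(2)] by blast+
    have ee: "e \<bullet> e = 1" using e(2) by (simp add: dot_square_norm)
    have V_split: "x - (e \<bullet> x) *\<^sub>R e \<in> W" if "x \<in> V" for x
      using that e(1) less.prems(1) ee unfolding W_def
      by (auto simp: subspace_diff subspace_scale inner_diff_right)
    have "e \<notin> W" using ee unfolding W_def by simp
    then have "W \<subset> V" using e(1) unfolding W_def by blast
    then have "dim W < dim V"
      using dim_psubset[of W V] W(1) less.prems(1) by (metis span_eq_iff)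
    then obtain B where B: "B \<subseteq> W" "finite B" "pairwise orthogonal B" "\<forall>e\<in>B. norm e = 1"
      "span B = W" "\<forall>e\<in>B. T e = (e \<bullet> T e) *\<^sub>R e"
      using less.hyps W by blast
    show ?thesis
    proof (intro exI[of _ "insert e B"] conjI)
      show "insert e B \<subseteq> V" using B(1) e(1) unfolding W_def by auto
      show "pairwise orthogonal (insert e B)"
        using B(1,3) unfolding pairwise_insert W_def by (auto simp: orthogonal_def inner_commute)
      show "span (insert e B) = V"
      proof
        show "span (insert e B) \<subseteq> V"
          using B(1) e(1) less.prems(1) unfolding W_def by (simp add: span_minimal)
        show "V \<subseteq> span (insert e B)" unfolding span_insert using V_split B(5) by blast
      qed
    qed (use B e Te in auto)
  qed
qed

definition orthonormal_basis :: "'a::euclidean_space set \<Rightarrow> bool" where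
  "orthonormal_basis B \<longleftrightarrow> finite B \<and> pairwise orthogonal B \<and> (\<forall>e\<in>B. norm e = 1) \<and> span B = UNIV"

theorem symmetric_map_orthonormal_eigenbasis:
  fixes T :: "'a::euclidean_space \<Rightarrow> 'a"
  assumes "symmetric_map T"
  obtains B \<mu> where "orthonormal_basis B" "\<And>e. e \<in> B \<Longrightarrow> T e = \<mu> e *\<^sub>R e"
proof -
  obtain B where "finite B" "pairwise orthogonal B" "\<forall>e\<in>B. norm e = 1" "span B = UNIV"
    and "\<forall>e\<in>B. T e = (e \<bullet> T e) *\<^sub>R e"
    using symmetric_map_invariant_subspace_eigenbasis[OF assms subspace_UNIV] by auto
  then show thesis using that[of B "\<lambda>e. e \<bullet> T e"] unfolding orthonormal_basis_def by simp
qed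

lemma orthonormal_basis_inner:
  assumes "orthonormal_basis B" "e \<in> B" "e' \<in> B"
  shows "e \<bullet> e' = (if e = e' then 1 else 0)"
  using assms unfolding orthonormal_basis_def pairwise_def orthogonal_def
  by (auto simp: dot_square_norm)

lemma orthonormal_basis_expansion:
  assumes "orthonormal_basis B"
  shows "(\<Sum>e\<in>B. (x \<bullet> e) *\<^sub>R e) = x"
  using assms unfolding orthonormal_basis_def by (intro orthonormal_basis_expand) auto

lemma inner_sum_orthonormal_basis:
  assumes "orthonormal_basis B" "e' \<in> B"
  shows "(\<Sum>e\<in>B. u e *\<^sub>R e) \<bullet> e' = u e'"
proof -
  have "(\<Sum>e\<in>B. u e *\<^sub>R e) \<bullet> e' = (\<Sum>e\<in>B. if e = e' then u e' else 0)"
    using orthonormal_basis_inner[OF assms(1) _ assms(2)] by (auto simp: inner_sum_left intro: sum.cong)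
  also have "\<dots> = u e'" using assms unfolding orthonormal_basis_def by simp
  finally show ?thesis .
qed

lemma inner_orthonormal_basis:
  assumes "orthonormal_basis B"
  shows "x \<bullet> z = (\<Sum>e\<in>B. (x \<bullet> e) * (z \<bullet> e))"
proof -
  have "x \<bullet> z = (\<Sum>e\<in>B. (x \<bullet> e) *\<^sub>R e) \<bullet> z" using orthonormal_basis_expansion[OF assms] by simp
  also have "\<dots> = (\<Sum>e\<in>B. (x \<bullet> e) * (e \<bullet> z))" by (simp add: inner_sum_left)
  finally show ?thesis by (simp add: inner_commute)
qed

lemma orthonormal_basis_coord_nonzero:
  assumes "orthonormal_basis B" "x \<noteq> 0"
  obtains e where "e \<in> B" "x \<bullet> e \<noteq> 0"
  using orthonormal_basis_expansion[OF assms(1), of x] assms(2)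
  by (metis (no_types, lifting) scale_zero_left sum.neutral)

lemma positive_definite_if_eigenvalues_pos:
  fixes T :: "'a::euclidean_space \<Rightarrow> 'a"
  assumes T: "symmetric_map T" and B: "orthonormal_basis B"
    and eigen: "\<And>e. e \<in> B \<Longrightarrow> T e = \<mu> e *\<^sub>R e"
    and pos: "\<And>e. e \<in> B \<Longrightarrow> \<mu> e > 0"
  shows "positive_definite T"
  unfolding positive_definite_def
proof (intro allI impI)
  fix x :: 'a assume "x \<noteq> 0"
  then obtain e1 where e1: "e1 \<in> B" "x \<bullet> e1 \<noteq> 0" using orthonormal_basis_coord_nonzero[OF B] by blast
  have "x \<bullet> T x = (\<Sum>e\<in>B. (x \<bullet> e) * (T x \<bullet> e))" by (rule inner_orthonormal_basis[OF B])
  also have "\<dots> = (\<Sum>e\<in>B. \<mu> e * (x \<bullet> e)^2)"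
    using eigen symmetric_map_inner[OF T, of x] by (intro sum.cong) (auto simp: power2_eq_square)
  also have "\<dots> > 0"
    using B e1 pos unfolding orthonormal_basis_def
    by (intro sum_pos2[OF _ e1(1)]) (auto simp: less_imp_le)
  finally show "x \<bullet> T x > 0" .
qed

section \<open>Polars of asymmetric quadratic gauge bodies\<close>

definition asym_sq :: "real \<Rightarrow> real \<Rightarrow> real \<Rightarrow> real" where
  "asym_sq p q s = p * (max s 0)^2 + q * (min s 0)^2"

lemma asym_sq_nonneg: "p \<ge> 0 \<Longrightarrow> q \<ge> 0 \<Longrightarrow> asym_sq p q s \<ge> 0"
  unfolding asym_sq_def by simp

lemma asym_sq_divide: "R > 0 \<Longrightarrow> asym_sq p q (s / R) = asym_sq p q s / R^2"
  unfolding asym_sq_def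
  by (auto simp: max_def min_def power2_eq_square field_simps divide_le_0_iff zero_le_divide_iff)

lemma young_sq:
  fixes p s t :: real
  assumes "p > 0"
  shows "2 * (s * t) \<le> p * s^2 + t^2 / p"
proof -
  have "p * s^2 + t^2 / p - 2 * (s * t) = (p * s - t)^2 / p"
    using assms by (simp add: field_simps power2_eq_square)
  also have "\<dots> \<ge> 0" using assms by simp
  finally show ?thesis by simp
qed

lemma asym_sq_young:
  assumes p: "p > 0" and q: "q > 0"
  shows "2 * (s * t) \<le> asym_sq p q s + asym_sq (1 / p) (1 / q) t"
proof -
  have rhs_nonneg: "asym_sq p q s + asym_sq (1 / p) (1 / q) t \<ge> 0"
    using p q by (simp add: asym_sq_nonneg add_nonneg_nonneg)
  consider "s \<ge> 0" "t \<ge> 0" | "s \<le> 0" "t \<le> 0" | "s * t \<le> 0"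
    by (smt (verit) mult_nonneg_nonpos mult_nonpos_nonneg)
  then show ?thesis
  proof cases
    case 1
    then show ?thesis using young_sq[OF p, of s t] unfolding asym_sq_def by simp
  next
    case 2
    then show ?thesis using young_sq[OF q, of s t] unfolding asym_sq_def by simp
  next
    case 3
    then show ?thesis using rhs_nonneg by linarith
  qed
qed

definition asym_sq_dual_point :: "real \<Rightarrow> real \<Rightarrow> real \<Rightarrow> real" where
  "asym_sq_dual_point p q t = (if t \<ge> 0 then t / p else t / q)"

lemma asym_sq_dual_point:
  assumes "p > 0" "q > 0"
  shows "asym_sq p q (asym_sq_dual_point p q t) = asym_sq (1 / p) (1 / q) t"
    and "asym_sq_dual_point p q t * t = asym_sq (1 / p) (1 / q) t"
  using assms unfolding asym_sq_def asym_sq_dual_point_def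
  by (auto simp: max_def min_def power2_eq_square field_simps divide_le_0_iff zero_le_divide_iff)

definition gauge_body :: "'a::euclidean_space set \<Rightarrow> ('a \<Rightarrow> real) \<Rightarrow> ('a \<Rightarrow> real) \<Rightarrow> 'a set" where
  "gauge_body B P Q = {x. (\<Sum>e\<in>B. asym_sq (P e) (Q e) (x \<bullet> e)) \<le> 1}"

lemma gauge_body_dual_subset_polar:
  assumes B: "orthonormal_basis B" and pos: "\<forall>e\<in>B. P e > 0 \<and> Q e > 0"
  shows "gauge_body B (\<lambda>e. 1 / P e) (\<lambda>e. 1 / Q e) \<subseteq> polar (gauge_body B P Q)"
  unfolding polar_def
proof (intro subsetI CollectI ballI)
  fix z x assume z: "z \<in> gauge_body B (\<lambda>e. 1 / P e) (\<lambda>e. 1 / Q e)" and x: "x \<in> gauge_body B P Q"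
  have "2 * (x \<bullet> z) = (\<Sum>e\<in>B. 2 * ((x \<bullet> e) * (z \<bullet> e)))"
    unfolding inner_orthonormal_basis[OF B, of x z] by (simp add: sum_distrib_left)
  also have "\<dots> \<le> (\<Sum>e\<in>B. asym_sq (P e) (Q e) (x \<bullet> e) + asym_sq (1 / P e) (1 / Q e) (z \<bullet> e))"
    using pos asym_sq_young by (intro sum_mono) auto
  also have "\<dots> \<le> 2"
    using x z unfolding gauge_body_def by (simp add: sum.distrib)
  finally show "x \<bullet> z \<le> 1" by simp
qed

lemma polar_subset_gauge_body_dual:
  assumes B: "orthonormal_basis B" and pos: "\<forall>e\<in>B. P e > 0 \<and> Q e > 0"
  shows "polar (gauge_body B P Q) \<subseteq> gauge_body B (\<lambda>e. 1 / P e) (\<lambda>e. 1 / Q e)"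
proof
  fix z assume z: "z \<in> polar (gauge_body B P Q)"
  define R2 where "R2 = (\<Sum>e\<in>B. asym_sq (1 / P e) (1 / Q e) (z \<bullet> e))"
  show "z \<in> gauge_body B (\<lambda>e. 1 / P e) (\<lambda>e. 1 / Q e)"
  proof (rule ccontr)
    assume "z \<notin> gauge_body B (\<lambda>e. 1 / P e) (\<lambda>e. 1 / Q e)"
    then have "R2 > 1" unfolding R2_def gauge_body_def by simp
    define R where "R = sqrt R2"
    have R: "R > 1" "R^2 = R2" using \<open>R2 > 1\<close> unfolding R_def by auto
    define x where "x = (\<Sum>e\<in>B. (asym_sq_dual_point (P e) (Q e) (z \<bullet> e) / R) *\<^sub>R e)"
    have x_coord: "x \<bullet> e = asym_sq_dual_point (P e) (Q e) (z \<bullet> e) / R" if "e \<in> B" for e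
      unfolding x_def using inner_sum_orthonormal_basis[OF B that] .
    have "(\<Sum>e\<in>B. asym_sq (P e) (Q e) (x \<bullet> e)) = R2 / R^2"
      unfolding R2_def sum_divide_distrib using x_coord pos R(1)
      by (intro sum.cong) (auto simp: asym_sq_divide asym_sq_dual_point(1))
    then have "x \<in> gauge_body B P Q" using R \<open>R2 > 1\<close> unfolding gauge_body_def by simp
    then have "x \<bullet> z \<le> 1" using z unfolding polar_def by blast
    moreover have "x \<bullet> z = R2 / R"
      unfolding inner_orthonormal_basis[OF B, of x z] R2_def sum_divide_distrib
      using x_coord pos by (intro sum.cong) (auto simp: asym_sq_dual_point(2))
    moreover have "R2 / R = R" using R by (auto simp: power2_eq_square)
    ultimately show False using R by simp
  qed
qed

lemma polar_gauge_body:
  assumes "orthonormal_basis B" "\<forall>e\<in>B. P e > 0 \<and> Q e > 0"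
  shows "polar (gauge_body B P Q) = gauge_body B (\<lambda>e. 1 / P e) (\<lambda>e. 1 / Q e)"
  using gauge_body_dual_subset_polar[OF assms] polar_subset_gauge_body_dual[OF assms] by blast

lemma zero_in_interior_gauge_body: "0 \<in> interior (gauge_body B P Q)"
proof (rule interiorI)
  let ?U = "{x. (\<Sum>e\<in>B. asym_sq (P e) (Q e) (x \<bullet> e)) < 1}"
  show "open ?U"
    unfolding asym_sq_def by (intro open_Collect_less continuous_intros)
  show "?U \<subseteq> gauge_body B P Q" unfolding gauge_body_def by auto
  show "0 \<in> ?U" by (simp add: asym_sq_def)
qed

lemma closed_polar: "closed (polar X)"
  and convex_polar: "convex (polar X)"
proof -
  have "polar X = (\<Inter>a\<in>X. {x. a \<bullet> x \<le> 1})" unfolding polar_def by auto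
  then show "closed (polar X)" "convex (polar X)"
    by (simp_all add: closed_INT closed_halfspace_le convex_INT convex_halfspace_le)
qed

lemma bounded_polar:
  fixes Y :: "'a::euclidean_space set"
  assumes "0 \<in> interior Y"
  shows "bounded (polar Y)"
proof -
  obtain r where r: "r > 0" "cball 0 r \<subseteq> Y" using assms mem_interior_cball by blast
  have "norm x \<le> 1 / r" if "x \<in> polar Y" for x
  proof (cases "x = 0")
    case False
    have "(r / norm x) *\<^sub>R x \<in> Y" using r False by (intro subsetD[OF r(2)]) auto
    then have "((r / norm x) *\<^sub>R x) \<bullet> x \<le> 1" using that unfolding polar_def by blast
    then have "r * norm x \<le> 1" using False by (simp add: dot_square_norm power2_eq_square)
    then show ?thesis using r by (simp add: field_simps mult.commute)
  qed (use r in simp)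
  then show ?thesis unfolding bounded_iff by blast
qed

lemma gauge_body_in_K0b:
  assumes B: "orthonormal_basis B" and pos: "\<forall>e\<in>B. P e > 0 \<and> Q e > 0"
  shows "gauge_body B P Q \<in> K0b"
proof -
  define Y where "Y = gauge_body B (\<lambda>e. 1 / P e) (\<lambda>e. 1 / Q e)"
  have "\<forall>e\<in>B. 1 / P e > 0 \<and> 1 / Q e > 0" using pos by simp
  from polar_gauge_body[OF B this] have X: "gauge_body B P Q = polar Y" unfolding Y_def by simp
  have "bounded (polar Y)" unfolding Y_def by (intro bounded_polar zero_in_interior_gauge_body)
  then show ?thesis
    unfolding K0b_def compact_eq_bounded_closed
    using zero_in_interior_gauge_body[of B P Q] X by (simp add: closed_polar convex_polar)
qed

section \<open>Bodies with \<open>X\<degree> = T X\<close>\<close>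

lemma image_gauge_body:
  assumes "bij T" and coord: "\<And>x e. e \<in> B \<Longrightarrow> T x \<bullet> e = l e * (x \<bullet> e)"
    and weights: "\<And>e s. e \<in> B \<Longrightarrow> asym_sq (P' e) (Q' e) (l e * s) = asym_sq (P e) (Q e) s"
  shows "T ` gauge_body B P Q = gauge_body B P' Q'"
proof (rule set_eqI)
  fix y
  obtain x where y: "y = T x" using \<open>bij T\<close> by (metis bij_pointE)
  have "y \<in> T ` gauge_body B P Q \<longleftrightarrow> x \<in> gauge_body B P Q"
    using y bij_is_inj[OF \<open>bij T\<close>] by (simp add: inj_image_mem_iff)
  also have "\<dots> \<longleftrightarrow> y \<in> gauge_body B P' Q'"
    unfolding gauge_body_def y using coord weights by (simp cong: sum.cong)
  finally show "y \<in> T ` gauge_body B P Q \<longleftrightarrow> y \<in> gauge_body B P' Q'" .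
qed

lemma gauge_body_ray:
  assumes "orthonormal_basis B" "e0 \<in> B" "t \<ge> 0"
  shows "t *\<^sub>R e0 \<in> gauge_body B P Q \<longleftrightarrow> P e0 * t^2 \<le> 1"
proof -
  have "(\<Sum>e\<in>B. asym_sq (P e) (Q e) ((t *\<^sub>R e0) \<bullet> e)) = (\<Sum>e\<in>B. if e = e0 then P e0 * t^2 else 0)"
    using assms orthonormal_basis_inner[OF assms(1,2)] by (intro sum.cong) (auto simp: asym_sq_def)
  also have "\<dots> = P e0 * t^2" using assms unfolding orthonormal_basis_def by simp
  finally show ?thesis unfolding gauge_body_def by simp
qed

lemma gauge_body_neq:
  assumes "orthonormal_basis B" "e0 \<in> B" "0 < P e0" "P e0 < P' e0"
  shows "gauge_body B P Q \<noteq> gauge_body B P' Q'"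
proof
  assume eq: "gauge_body B P Q = gauge_body B P' Q'"
  define t where "t = 1 / sqrt (P e0)"
  have t: "t > 0" "P e0 * t^2 = 1" using assms(3) unfolding t_def by (auto simp: power_divide)
  then have "P' e0 * t^2 > 1" using assms(4) by (metis mult_strict_right_mono zero_less_power2 less_irrefl)
  then show False
    using eq t gauge_body_ray[OF assms(1,2), of t P Q] gauge_body_ray[OF assms(1,2), of t P' Q'] by simp
qed

definition weight_pos_part :: "real \<Rightarrow> real \<Rightarrow> real" where
  "weight_pos_part l c = (if l < 0 then - l * c^2 else l)"

definition weight_neg_part :: "real \<Rightarrow> real \<Rightarrow> real" where
  "weight_neg_part l c = (if l < 0 then - l / c^2 else l)"

lemma weight_parts_pos: "l \<noteq> 0 \<Longrightarrow> c > 0 \<Longrightarrow> weight_pos_part l c > 0 \<and> weight_neg_part l c > 0"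
  unfolding weight_pos_part_def weight_neg_part_def by (auto simp: mult_neg_pos divide_neg_pos)

lemma asym_sq_weight_parts_scale:
  assumes "l \<noteq> 0" "c > 0"
  shows "asym_sq (1 / weight_pos_part l c) (1 / weight_neg_part l c) (l * s)
       = asym_sq (weight_pos_part l c) (weight_neg_part l c) s"
  using assms unfolding asym_sq_def weight_pos_part_def weight_neg_part_def
  by (cases "l < 0"; cases "s \<ge> 0")
    (auto simp: max_def min_def power2_eq_square field_simps mult_le_0_iff zero_le_mult_iff)

lemma infinite_polar_eq_image_solutions:
  fixes T :: "'a::euclidean_space \<Rightarrow> 'a"
  assumes bij: "bij T" and T: "symmetric_map T" and not_pd: "\<not> positive_definite T"
  shows "infinite {X \<in> K0b. polar X = T ` X}"
proof -
  obtain B \<mu> where B: "orthonormal_basis B" and eigen: "\<And>e. e \<in> B \<Longrightarrow> T e = \<mu> e *\<^sub>R e"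
    using symmetric_map_orthonormal_eigenbasis[OF T] by blast
  have coord: "T x \<bullet> e = \<mu> e * (x \<bullet> e)" if "e \<in> B" for x e
    using symmetric_map_inner[OF T, of x e] eigen[OF that] by simp
  have nonzero: "\<mu> e \<noteq> 0" if "e \<in> B" for e
  proof
    assume "\<mu> e = 0"
    then have "T e = T 0" using eigen[OF that] linear_0[OF symmetric_map_linear[OF T]] by simp
    moreover have "e \<noteq> 0" using B that unfolding orthonormal_basis_def by auto
    ultimately show False using bij_is_inj[OF bij] by (auto dest: injD)
  qed
  have "\<exists>e0\<in>B. \<mu> e0 < 0"
  proof (rule ccontr)
    assume "\<not> (\<exists>e0\<in>B. \<mu> e0 < 0)"
    then have "\<And>e. e \<in> B \<Longrightarrow> \<mu> e > 0" using nonzero by force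
    then show False using positive_definite_if_eigenvalues_pos[OF T B eigen] not_pd by blast
  qed
  then obtain e0 where e0: "e0 \<in> B" "\<mu> e0 < 0" by blast
  define X where
    "X c = gauge_body B (\<lambda>e. weight_pos_part (\<mu> e) c) (\<lambda>e. weight_neg_part (\<mu> e) c)" for c
  have solution: "X c \<in> {X \<in> K0b. polar X = T ` X}" if "c > 0" for c :: real
  proof -
    have pos: "\<forall>e\<in>B. weight_pos_part (\<mu> e) c > 0 \<and> weight_neg_part (\<mu> e) c > 0"
      using weight_parts_pos nonzero that by blast
    have "polar (X c) = T ` X c"
      unfolding X_def polar_gauge_body[OF B pos]
      using bij coord asym_sq_weight_parts_scale nonzero that
      by (intro image_gauge_body[where l = \<mu>, symmetric]) auto
    then show ?thesis using gauge_body_in_K0b[OF B pos] unfolding X_def by simp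
  qed
  have "inj_on X {0<..}"
  proof (rule linorder_inj_onI')
    fix c c' :: real assume "c \<in> {0<..}" "c' \<in> {0<..}" "c < c'"
    then have "0 < weight_pos_part (\<mu> e0) c" "weight_pos_part (\<mu> e0) c < weight_pos_part (\<mu> e0) c'"
      using e0(2) unfolding weight_pos_part_def by (auto simp: power_strict_mono mult_neg_pos)
    then show "X c \<noteq> X c'" unfolding X_def by (rule gauge_body_neq[OF B e0(1)])
  qed
  then have "infinite (X ` {0<..})" using infinite_Ioi by (simp add: finite_image_iff)
  moreover have "X ` {0<..} \<subseteq> {X \<in> K0b. polar X = T ` X}" using solution by auto
  ultimately show ?thesis using infinite_super by blast
qed

theorem mainTheorem19:
  fixes T :: "real^'n \<Rightarrow> real^'n"
  assumes "CARD('n) \<ge> 2"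
    and "linear T" and "bij T" and "symmetric_map T"
    and "\<not> positive_definite T"
  shows "infinite {X \<in> K0b. polar X = T ` X}
         \<and> infinite {X :: (real^'n) set. X \<in> K0b \<and> polar X = uminus ` X}"
proof
  show "infinite {X \<in> K0b. polar X = T ` X}"
    by (rule infinite_polar_eq_image_solutions[OF assms(3-5)])
  have "symmetric_map (uminus :: real^'n \<Rightarrow> real^'n)"
    unfolding symmetric_map_def by (simp add: linear_uminus)
  moreover have "\<not> positive_definite (uminus :: real^'n \<Rightarrow> real^'n)"
  proof -
    obtain v :: "real^'n" where "v \<in> Basis" using nonempty_Basis by blast
    then have "v \<noteq> 0" "\<not> v \<bullet> - v > 0" using nonzero_Basis by auto
    then show ?thesis unfolding positive_definite_def by blast
  qed
  ultimately show "infinite {X :: (real^'n) set. X \<in> K0b \<and> polar X = uminus ` X}"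
    using infinite_polar_eq_image_solutions[OF bij_uminus] by simp
qed

end
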